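(* For all integers $n,a,b$, $$J\mathcal{G}_{n+a}^{(3)}J\mathcal{G}_{n+b}^{(3)}-J\mathcal{G}_{n}^{(3)}J\mathcal{G}_{n+a+b}^{(3)}=\frac{1}{49}\Big\{2^{n+1}\left[\Theta Y_{n+b}(a)-2^{b}Y_{n}(a)\Theta\right]+X_{a}\left[X_{b}\Xi-14X_{b+2}\Omega\right]\Big\}$$ and $$K\mathcal{G}_{n+a}^{(3)}K\mathcal{G}_{n+b}^{(3)}-K\mathcal{G}_{n}^{(3)}K\mathcal{G}_{n+a+b}^{(3)}=2^{n}\left[\Theta Y^{*}_{n+b}(a)-2^{b}Y^{*}_{n}(a)\Theta\right]+X_{a}\left[X_{b}\Xi^{*}-6X_{b+2}\Omega\right],$$ where $Y_{n}(a)=X_{n}(2^{a}\mathbf{A}+X_{a+2}\mathbf{A}-X_{a}\mathbf{B})-X_{n+1}(2^{a}\mathbf{B}+X_{a}\mathbf{A}-X_{a+1}\mathbf{B})$, $Y^{*}_{n}(a)=X_{n}(2^{a}\mathbf{C}+X_{a+2}\mathbf{C}-X_{a}\mathbf{D})-X_{n+1}(2^{a}\mathbf{D}+X_{a}\mathbf{C}-X_{a+1}\mathbf{D})$, $\Xi=\mathbf{A}^2+\mathbf{A}\mathbf{B}+\mathbf{B}^2$ and $\Xi^{*}=\mathbf{C}^2+\mathbf{C}\mathbf{D}+\mathbf{D}^2$.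
   Context: Fix real numbers $\lambda_1,\lambda_2,\lambda_3$. The algebra $\mathbb{H}_{\lambda_1,\lambda_2,\lambda_3}$ of 3-parameter generalized quaternions is the real associative algebra of elements $\psi_0+\psi_1\mathbf{e}_1+\psi_2\mathbf{e}_2+\psi_3\mathbf{e}_3$ ($\psi_i\in\mathbb{R}$) with $\mathbf{e}_1^2=-\lambda_1\lambda_2$, $\mathbf{e}_2^2=-\lambda_1\lambda_3$, $\mathbf{e}_3^2=-\lambda_2\lambda_3$, $\mathbf{e}_1\mathbf{e}_2=-\mathbf{e}_2\mathbf{e}_1=\lambda_1\mathbf{e}_3$, $\mathbf{e}_1\mathbf{e}_3=-\mathbf{e}_3\mathbf{e}_1=-\lambda_2\mathbf{e}_2$, $\mathbf{e}_2\mathbf{e}_3=-\mathbf{e}_3\mathbf{e}_2=\lambda_3\mathbf{e}_1$. The third-order Jacobsthal numbers satisfy $J_0^{(3)}=0$, $J_1^{(3)}=J_2^{(3)}=1$, $J_n^{(3)}=J_{n-1}^{(3)}+J_{n-2}^{(3)}+2J_{n-3}^{(3)}$; the modified third-order Jacobsthal numbers satisfy $K_0^{(3)}=3$, $K_1^{(3)}=1$, $K_2^{(3)}=3$, $K_n^{(3)}=K_{n-1}^{(3)}+K_{n-2}^{(3)}+2K_{n-3}^{(3)}$; both are extended to all integers $n$ by running the recurrence backwards (equivalently by the Binet formulas $J_n^{(3)}=\frac17[2^{n+1}+X_n-2X_{n+1}]$, $K_n^{(3)}=2^n+X_n+2X_{n+1}$, which are rational-valued for negative $n$). For all integers $n$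 define $J\mathcal{G}_n^{(3)}=J_n^{(3)}+J_{n+1}^{(3)}\mathbf{e}_1+J_{n+2}^{(3)}\mathbf{e}_2+J_{n+3}^{(3)}\mathbf{e}_3$ and $K\mathcal{G}_n^{(3)}=K_n^{(3)}+K_{n+1}^{(3)}\mathbf{e}_1+K_{n+2}^{(3)}\mathbf{e}_2+K_{n+3}^{(3)}\mathbf{e}_3$. Here $X_n=0,1,-1$ according as $n\equiv0,1,2\pmod 3$ (for all integers $n$), $\Theta=1+2\mathbf{e}_1+4\mathbf{e}_2+8\mathbf{e}_3$, $\mathbf{A}=1+2\mathbf{e}_1-3\mathbf{e}_2+\mathbf{e}_3$, $\mathbf{B}=2-3\mathbf{e}_1+\mathbf{e}_2+2\mathbf{e}_3$, $\mathbf{C}=1-2\mathbf{e}_1+\mathbf{e}_2+\mathbf{e}_3$, $\mathbf{D}=-2+\mathbf{e}_1+\mathbf{e}_2-2\mathbf{e}_3$, and $\Omega=\lambda_3\mathbf{e}_1+\lambda_2\mathbf{e}_2+\lambda_1\mathbf{e}_3$. *)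

theory Defs
  imports Complex_Main
begin

(* 3-parameter generalized quaternions psi0 + psi1 e1 + psi2 e2 + psi3 e3 *)
datatype gq = GQ real real real real

fun gadd :: "gq \<Rightarrow> gq \<Rightarrow> gq" where
  "gadd (GQ a0 a1 a2 a3) (GQ b0 b1 b2 b3) = GQ (a0+b0) (a1+b1) (a2+b2) (a3+b3)"

fun gsub :: "gq \<Rightarrow> gq \<Rightarrow> gq" where
  "gsub (GQ a0 a1 a2 a3) (GQ b0 b1 b2 b3) = GQ (a0-b0) (a1-b1) (a2-b2) (a3-b3)"

fun gscale :: "real \<Rightarrow> gq \<Rightarrow> gq" where
  "gscale c (GQ a0 a1 a2 a3) = GQ (c*a0) (c*a1) (c*a2) (c*a3)"

(* multiplication in H_{l1,l2,l3}: bilinear extension of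
   e1^2=-l1 l2, e2^2=-l1 l3, e3^2=-l2 l3,
   e1e2=-e2e1=l1 e3, e1e3=-e3e1=-l2 e2, e2e3=-e3e2=l3 e1 *)
fun gmul :: "real \<Rightarrow> real \<Rightarrow> real \<Rightarrow> gq \<Rightarrow> gq \<Rightarrow> gq" where
  "gmul l1 l2 l3 (GQ a0 a1 a2 a3) (GQ b0 b1 b2 b3) =
     GQ (a0*b0 - l1*l2*a1*b1 - l1*l3*a2*b2 - l2*l3*a3*b3)
        (a0*b1 + a1*b0 + l3*(a2*b3 - a3*b2))
        (a0*b2 + a2*b0 - l2*(a1*b3 - a3*b1))
        (a0*b3 + a3*b0 + l1*(a1*b2 - a2*b1))"

definition X :: "int \<Rightarrow> real" where
  "X n = (if n mod 3 = 0 then 0 else if n mod 3 = 1 then 1 else -1)"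

(* third-order Jacobsthal and modified Jacobsthal numbers for all integers,
   via the Binet formulas *)
definition J3 :: "int \<Rightarrow> real" where
  "J3 n = (1/7) * (2 powi (n+1) + X n - 2 * X (n+1))"

definition K3 :: "int \<Rightarrow> real" where
  "K3 n = 2 powi n + X n + 2 * X (n+1)"

definition JG :: "int \<Rightarrow> gq" where
  "JG n = GQ (J3 n) (J3 (n+1)) (J3 (n+2)) (J3 (n+3))"

definition KG :: "int \<Rightarrow> gq" where
  "KG n = GQ (K3 n) (K3 (n+1)) (K3 (n+2)) (K3 (n+3))"

definition Theta :: gq where "Theta = GQ 1 2 4 8"
definition qA :: gq where "qA = GQ 1 2 (-3) 1"
definition qB :: gq where "qB = GQ 2 (-3) 1 2"
definition qC :: gq where "qC = GQ 1 (-2) 1 1"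
definition qD :: gq where "qD = GQ (-2) 1 1 (-2)"

definition Omega :: "real \<Rightarrow> real \<Rightarrow> real \<Rightarrow> gq" where
  "Omega l1 l2 l3 = GQ 0 l3 l2 l1"

definition Y :: "int \<Rightarrow> int \<Rightarrow> gq" where
  "Y n a = gsub
     (gscale (X n) (gsub (gadd (gscale (2 powi a) qA) (gscale (X (a+2)) qA)) (gscale (X a) qB)))
     (gscale (X (n+1)) (gsub (gadd (gscale (2 powi a) qB) (gscale (X a) qA)) (gscale (X (a+1)) qB)))"

definition Ystar :: "int \<Rightarrow> int \<Rightarrow> gq" where
  "Ystar n a = gsub
     (gscale (X n) (gsub (gadd (gscale (2 powi a) qC) (gscale (X (a+2)) qC)) (gscale (X a) qD)))
     (gscale (X (n+1)) (gsub (gadd (gscale (2 powi a) qD) (gscale (X a) qC)) (gscale (X (a+1)) qD)))"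

definition Xi :: "real \<Rightarrow> real \<Rightarrow> real \<Rightarrow> gq" where
  "Xi l1 l2 l3 = gadd (gadd (gmul l1 l2 l3 qA qA) (gmul l1 l2 l3 qA qB)) (gmul l1 l2 l3 qB qB)"

definition Xistar :: "real \<Rightarrow> real \<Rightarrow> real \<Rightarrow> gq" where
  "Xistar l1 l2 l3 = gadd (gadd (gmul l1 l2 l3 qC qC) (gmul l1 l2 l3 qC qD)) (gmul l1 l2 l3 qD qD)"

end

theory Submission imports Defs begin

(* By the Binet formulas, JG_n = (2^(n+1) Theta + U_n) / 7 and KG_n = 2^n Theta + V_n with
   3-periodic parts U_n = X_n A - X_(n+1) B and V_n = X_n C - X_(n+1) D.  In a Catalan-type
   difference G_(n+a) G_(n+b) - G_n G_(n+a+b) of such sequences the purely geometric products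
   cancel, the mixed products give the Y-terms since Y_n(a) = 2^a U_n - U_(n+a), and the purely
   periodic products collapse by the scalar identity X_(n+a) X_(n+b) - X_n X_(n+a+b) = X_a X_b.
   Noncommutativity enters only through B A - A B = 14 Omega and D C - C D = 6 Omega. *)

lemma X_numeral:
  "X 0 = 0" "X 1 = 1"
  "X (numeral k) =
     (if numeral k mod 3 = (0::int) then 0 else if numeral k mod 3 = (1::int) then 1 else -1)"
  by (simp_all add: X_def)

lemma X_cong_mod3: "m mod 3 = n mod 3 \<Longrightarrow> X m = X n"
  by (simp add: X_def)

lemma X_mod3: "X (n mod 3) = X n"
  by (rule X_cong_mod3) simp

lemma X_add_mod3_left: "X (m mod 3 + n) = X (m + n)"
  by (rule X_cong_mod3) (simp add: mod_add_left_eq)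

lemma X_add_mod3_right: "X (m + n mod 3) = X (m + n)"
  by (rule X_cong_mod3) (simp add: mod_add_right_eq)

lemma mod3_cases: "(n::int) mod 3 \<in> {0, 1, 2}"
  by auto

(* X_n = 2 sin(2 pi n / 3) / sqrt 3, so X_add and X_catalan are instances of sine identities;
   here they are checked on residues mod 3. *)
lemma X_add: "X (m + n) = X (m + 1) * X n - X m * X (n + 2)"
proof -
  have "X (i + j) = X (i + 1) * X j - X i * X (j + 2)"
    if "i \<in> {0, 1, 2}" "j \<in> {0, 1, 2}" for i j :: int
    using that by (auto simp: X_numeral)
  from this[OF mod3_cases mod3_cases, of m n] show ?thesis
    by (simp only: X_add_mod3_left X_add_mod3_right X_mod3)
qed

lemma X_catalan: "X (n + a) * X (n + b) - X n * X (n + a + b) = X a * X b"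
proof -
  have "X (i + j) * X (i + k) - X i * X (i + j + k) = X j * X k"
    if "i \<in> {0, 1, 2}" "j \<in> {0, 1, 2}" "k \<in> {0, 1, 2}" for i j k :: int
    using that by (auto simp: X_numeral)
  note this[OF mod3_cases mod3_cases mod3_cases, of n a b]
  moreover have "X (n mod 3 + a mod 3 + b mod 3) = X (n + a + b)"
    by (rule X_cong_mod3) presburger
  ultimately show ?thesis
    by (simp only: X_add_mod3_left X_add_mod3_right X_mod3)
qed

lemma X_plus3: "X (n + 3) = X n"
  using X_add[of n 3] by (simp add: X_numeral)

lemma X_plus2: "X (n + 2) = - X n - X (n + 1)"
  using X_add[of n 2] by (simp add: X_numeral)

lemma X_add_succ: "X (n + k + 1) = X (n + 1) * X (k + 1) - X n * X k"
  using X_add[of n "k + 1"] X_plus3[of k] by (simp add: add.assoc)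

lemma J3_add:
  "J3 (n + k) = 1/7 * (2 powi (n + 1) * 2 powi k
     + X (n + 1) * (X k - 2 * X (k + 1)) - X n * (X (k + 2) - 2 * X k))"
proof -
  have pow: "(2::real) powi (n + k + 1) = 2 powi (n + 1) * 2 powi k"
    by (simp add: power_int_add)
  show ?thesis
    unfolding J3_def X_add[of n k] X_add_succ[of n k] pow by (simp add: algebra_simps)
qed

lemma K3_add:
  "K3 (n + k) = 2 powi n * 2 powi k
     + X (n + 1) * (X k + 2 * X (k + 1)) - X n * (X (k + 2) + 2 * X k)"
proof -
  have pow: "(2::real) powi (n + k) = 2 powi n * 2 powi k"
    by (simp add: power_int_add)
  show ?thesis
    unfolding K3_def X_add[of n k] X_add_succ[of n k] pow by (simp add: algebra_simps)
qed

lemma gmul_gscale: "gmul l1 l2 l3 (gscale c x) (gscale d y) = gscale (c * d) (gmul l1 l2 l3 x y)"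
  by (cases x; cases y) (simp add: algebra_simps)

lemma gsub_gscale: "gsub (gscale c x) (gscale c y) = gscale c (gsub x y)"
  by (cases x; cases y) (simp add: algebra_simps)

lemma gmul_diff_of_combinations:
  "gsub (gmul l1 l2 l3 (gsub (gscale x Q) (gscale y R)) (gsub (gscale z Q) (gscale w R)))
        (gmul l1 l2 l3 (gsub (gscale x' Q) (gscale y' R)) (gsub (gscale z' Q) (gscale w' R))) =
   gadd (gsub (gscale (x * z - x' * z') (gmul l1 l2 l3 Q Q))
              (gscale (x * w - x' * w') (gmul l1 l2 l3 Q R)))
        (gsub (gscale (y * w - y' * w') (gmul l1 l2 l3 R R))
              (gscale (y * z - y' * z') (gmul l1 l2 l3 R Q)))"
  by (cases Q; cases R) (simp add: algebra_simps)

definition periodic_part :: "gq \<Rightarrow> gq \<Rightarrow> int \<Rightarrow> gq" where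
  "periodic_part Q R n = gsub (gscale (X n) Q) (gscale (X (n + 1)) R)"

definition binet_form :: "real \<Rightarrow> gq \<Rightarrow> (int \<Rightarrow> gq) \<Rightarrow> int \<Rightarrow> gq" where
  "binet_form r P U n = gadd (gscale (r powi n) P) (U n)"

lemma JG_binet_form: "JG n = gscale (1/7) (binet_form 2 (gscale 2 Theta) (periodic_part qA qB) n)"
  using J3_add[of n 1] J3_add[of n 2] J3_add[of n 3]
  by (simp add: JG_def J3_def binet_form_def periodic_part_def Theta_def qA_def qB_def
      X_numeral power_int_add algebra_simps)

lemma KG_binet_form: "KG n = binet_form 2 Theta (periodic_part qC qD) n"
  using K3_add[of n 1] K3_add[of n 2] K3_add[of n 3]
  by (simp add: KG_def K3_def binet_form_def periodic_part_def Theta_def qC_def qD_def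
      X_numeral algebra_simps)

lemma binet_form_catalan:
  fixes r :: real
  assumes "r \<noteq> 0"
  shows "gsub (gmul l1 l2 l3 (binet_form r P U (n + a)) (binet_form r P U (n + b)))
              (gmul l1 l2 l3 (binet_form r P U n) (binet_form r P U (n + a + b))) =
    gadd
      (gscale (r powi n)
        (gsub (gmul l1 l2 l3 P (gsub (gscale (r powi a) (U (n + b))) (U (n + b + a))))
              (gscale (r powi b) (gmul l1 l2 l3 (gsub (gscale (r powi a) (U n)) (U (n + a))) P))))
      (gsub (gmul l1 l2 l3 (U (n + a)) (U (n + b))) (gmul l1 l2 l3 (U n) (U (n + a + b))))"
proof -
  have pow: "r powi (n + a) = r powi n * r powi a" "r powi (n + b) = r powi n * r powi b"
    "r powi (n + a + b) = r powi n * r powi a * r powi b"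
    using assms by (simp_all add: power_int_add)
  have "n + b + a = n + a + b"
    by simp
  then show ?thesis
    unfolding binet_form_def pow
    by (cases P; cases "U n"; cases "U (n + a)"; cases "U (n + b)"; cases "U (n + a + b)")
      (simp add: algebra_simps)
qed

lemma scaled_periodic_part_diff:
  "gsub (gscale c (periodic_part Q R n)) (periodic_part Q R (n + a)) =
   gsub (gscale (X n) (gsub (gadd (gscale c Q) (gscale (X (a + 2)) Q)) (gscale (X a) R)))
        (gscale (X (n + 1)) (gsub (gadd (gscale c R) (gscale (X a) Q)) (gscale (X (a + 1)) R)))"
  unfolding periodic_part_def X_add[of n a] X_add_succ[of n a]
  by (cases Q; cases R) (simp add: algebra_simps)

lemma Y_eq: "Y n a = gsub (gscale (2 powi a) (periodic_part qA qB n)) (periodic_part qA qB (n + a))"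
  unfolding Y_def scaled_periodic_part_diff ..

lemma Ystar_eq:
  "Ystar n a = gsub (gscale (2 powi a) (periodic_part qC qD n)) (periodic_part qC qD (n + a))"
  unfolding Ystar_def scaled_periodic_part_diff ..

lemma periodic_part_catalan:
  assumes "gmul l1 l2 l3 R Q = gadd (gmul l1 l2 l3 Q R) Z"
  shows "gsub (gmul l1 l2 l3 (periodic_part Q R (n + a)) (periodic_part Q R (n + b)))
              (gmul l1 l2 l3 (periodic_part Q R n) (periodic_part Q R (n + a + b))) =
         gscale (X a) (gsub (gscale (X b)
                  (gadd (gadd (gmul l1 l2 l3 Q Q) (gmul l1 l2 l3 Q R)) (gmul l1 l2 l3 R R)))
                (gscale (X (b + 2)) Z))"
proof -
  have QQ: "X (n + a) * X (n + b) - X n * X (n + a + b) = X a * X b"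
    by (rule X_catalan)
  have QR: "X (n + a) * X (n + b + 1) - X n * X (n + a + b + 1) = X a * X (b + 1)"
    using X_catalan[of n a "b + 1"] by (simp add: add.assoc)
  have RR: "X (n + a + 1) * X (n + b + 1) - X (n + 1) * X (n + a + b + 1) = X a * X b"
    using X_catalan[of "n + 1" a b] by (simp add: algebra_simps)
  have RQ: "X (n + a + 1) * X (n + b) - X (n + 1) * X (n + a + b) = X a * X (b + 2)"
    using X_catalan[of "n + 1" a "b - 1"] X_plus3[of "b - 1"] by (simp add: algebra_simps)
  have X_b1: "X (b + 1) = - X b - X (b + 2)"
    using X_plus2[of b] by simp
  show ?thesis
    unfolding periodic_part_def gmul_diff_of_combinations QQ QR RR RQ assms X_b1
    by (cases "gmul l1 l2 l3 Q Q"; cases "gmul l1 l2 l3 Q R"; cases "gmul l1 l2 l3 R R"; cases Z)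
      (simp add: algebra_simps)
qed

lemma qB_qA_commutator:
  "gmul l1 l2 l3 qB qA = gadd (gmul l1 l2 l3 qA qB) (gscale 14 (Omega l1 l2 l3))"
  by (simp add: qA_def qB_def Omega_def algebra_simps)

lemma qD_qC_commutator:
  "gmul l1 l2 l3 qD qC = gadd (gmul l1 l2 l3 qC qD) (gscale 6 (Omega l1 l2 l3))"
  by (simp add: qC_def qD_def Omega_def algebra_simps)

lemma JG_catalan:
  "gsub (gmul l1 l2 l3 (JG (n + a)) (JG (n + b))) (gmul l1 l2 l3 (JG n) (JG (n + a + b))) =
     gscale (1/49)
       (gadd
         (gscale (2 powi (n + 1))
            (gsub (gmul l1 l2 l3 Theta (Y (n + b) a))
                  (gscale (2 powi b) (gmul l1 l2 l3 (Y n a) Theta))))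
         (gscale (X a)
            (gsub (gscale (X b) (Xi l1 l2 l3)) (gscale (14 * X (b + 2)) (Omega l1 l2 l3)))))"
  (is "?lhs = ?rhs")
proof -
  let ?G = "binet_form 2 (gscale 2 Theta) (periodic_part qA qB)"
  have "?lhs = gscale (1/49) (gsub (gmul l1 l2 l3 (?G (n + a)) (?G (n + b)))
                                   (gmul l1 l2 l3 (?G n) (?G (n + a + b))))"
    unfolding JG_binet_form gmul_gscale gsub_gscale by simp
  also have "\<dots> = gscale (1/49)
       (gadd
         (gscale (2 powi n)
            (gsub (gmul l1 l2 l3 (gscale 2 Theta) (Y (n + b) a))
                  (gscale (2 powi b) (gmul l1 l2 l3 (Y n a) (gscale 2 Theta)))))
         (gscale (X a)
            (gsub (gscale (X b) (Xi l1 l2 l3)) (gscale (X (b + 2)) (gscale 14 (Omega l1 l2 l3))))))"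
    unfolding binet_form_catalan[OF numeral_neq_zero] Y_eq
      periodic_part_catalan[OF qB_qA_commutator] Xi_def ..
  also have "\<dots> = ?rhs"
    by (cases "Y (n + b) a"; cases "Y n a"; cases "Xi l1 l2 l3")
      (simp add: Theta_def Omega_def power_int_add algebra_simps)
  finally show ?thesis .
qed

lemma KG_catalan:
  "gsub (gmul l1 l2 l3 (KG (n + a)) (KG (n + b))) (gmul l1 l2 l3 (KG n) (KG (n + a + b))) =
     gadd
       (gscale (2 powi n)
          (gsub (gmul l1 l2 l3 Theta (Ystar (n + b) a))
                (gscale (2 powi b) (gmul l1 l2 l3 (Ystar n a) Theta))))
       (gscale (X a)
          (gsub (gscale (X b) (Xistar l1 l2 l3)) (gscale (6 * X (b + 2)) (Omega l1 l2 l3))))"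
proof -
  have "gscale (X (b + 2)) (gscale 6 (Omega l1 l2 l3)) = gscale (6 * X (b + 2)) (Omega l1 l2 l3)"
    by (simp add: Omega_def)
  then show ?thesis
    unfolding KG_binet_form binet_form_catalan[OF numeral_neq_zero] Ystar_eq
      periodic_part_catalan[OF qD_qC_commutator] Xistar_def by simp
qed

theorem theorem3p1:
  fixes l1 l2 l3 :: real and n a b :: int
  shows "(gsub (gmul l1 l2 l3 (JG (n+a)) (JG (n+b))) (gmul l1 l2 l3 (JG n) (JG (n+a+b))) =
           gscale (1/49)
             (gadd
               (gscale (2 powi (n+1))
                  (gsub (gmul l1 l2 l3 Theta (Y (n+b) a))
                        (gscale (2 powi b) (gmul l1 l2 l3 (Y n a) Theta))))
               (gscale (X a) (gsub (gscale (X b) (Xi l1 l2 l3)) (gscale (14 * X (b+2)) (Omega l1 l2 l3)))))) \<and>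
        (gsub (gmul l1 l2 l3 (KG (n+a)) (KG (n+b))) (gmul l1 l2 l3 (KG n) (KG (n+a+b))) =
           gadd
             (gscale (2 powi n)
                (gsub (gmul l1 l2 l3 Theta (Ystar (n+b) a))
                      (gscale (2 powi b) (gmul l1 l2 l3 (Ystar n a) Theta))))
             (gscale (X a) (gsub (gscale (X b) (Xistar l1 l2 l3)) (gscale (6 * X (b+2)) (Omega l1 l2 l3)))))"
  using JG_catalan KG_catalan by blast

end
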